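(* Let $0<\alpha<d$, $1\leq p<d/\alpha$, $f\in L^p(\mathbb{R}^d)$, and $\varepsilon>0$. Then there is a subset $\widetilde{\mathcal{Q}}_\alpha\subset\mathcal{Q}_\alpha$ such that for each $Q\in\mathcal{Q}_\alpha$ with $\ell(Q)^\alpha f_Q>\varepsilon$ there is $P\in\widetilde{\mathcal{Q}}_\alpha$ with $Q\subset\operatorname{prt}(P)$ and $f_Q\leq 2^d f_P$. Furthermore, for any two $Q,P\in\widetilde{\mathcal{Q}}_\alpha$ at least one of the following holds: (1) $\operatorname{prt}(Q)=\operatorname{prt}(P)$; (2) $\operatorname{prt}(Q)\cap\operatorname{prt}(P)=\emptyset$; (3) $f_Q/f_P\notin(2^{-d},2^d)$.
   Context: Dyadic cubes are $[x_1,x_1+2^n)\times\dots\times[x_d,x_d+2^n)$, $n\in\mathbb{Z}$, $x_i\in2^n\mathbb{Z}$; $\ell(Q)$ is the sidelength, $\operatorname{prt}(Q)$ is the dyadic parent of $Q$ (the dyadic cube of sidelength $2\ell(Q)$ containing $Q$), and $f_Q=\frac1{|Q|}\int_Q|f|$. $\mathcal{Q}_\alpha$ is the set of dyadic cubes $Q$ such that $\ell(P)^\alpha f_P<\ell(Q)^\alpha f_Q$ for every dyadic cube $P\supsetneq Q$. *)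

theory Defs
  imports "HOL-Analysis.Analysis"
begin

text \<open>A dyadic cube is indexed by its generation n (sidelength 2^n) and an integer
  lattice point k; the cube is the product of [k_i 2^n, (k_i+1) 2^n).\<close>
type_synonym 'd dyad = "int \<times> ('d \<Rightarrow> int)"

definition dcube :: "('d::finite) dyad \<Rightarrow> (real^'d) set" where
  "dcube Q = {x. \<forall>i. real_of_int (snd Q i) * 2 powr real_of_int (fst Q) \<le> x$i
                    \<and> x$i < (real_of_int (snd Q i) + 1) * 2 powr real_of_int (fst Q)}"

definition side :: "('d::finite) dyad \<Rightarrow> real" where
  "side Q = 2 powr real_of_int (fst Q)"

text \<open>Dyadic parent (int div is floor division).\<close>
definition prt :: "('d::finite) dyad \<Rightarrow> 'd dyad" where
  "prt Q = (fst Q + 1, \<lambda>i. snd Q i div 2)"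

definition avg :: "(real^'d \<Rightarrow> real) \<Rightarrow> ('d::finite) dyad \<Rightarrow> real" where
  "avg f Q = (LINT x:dcube Q|lebesgue. \<bar>f x\<bar>) / measure lebesgue (dcube Q)"

definition Qalpha :: "real \<Rightarrow> (real^'d \<Rightarrow> real) \<Rightarrow> ('d::finite) dyad set" where
  "Qalpha \<alpha> f = {Q. \<forall>P. dcube Q \<subset> dcube P \<longrightarrow>
                     side P powr \<alpha> * avg f P < side Q powr \<alpha> * avg f Q}"

end

theory Submission
  imports Defs
begin

text \<open>Since \<open>avg f Q \<le> (1 + \<integral>|f|^p) side(Q)^(-d/p)\<close> and \<open>\<alpha> < d/p\<close>, the cubes with
  \<open>side(Q)^\<alpha> avg f Q > \<epsilon>\<close> have bounded generation. So the relation ``\<open>P\<close> is of higher generation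
  than \<open>Q\<close>, \<open>prt Q \<subseteq> prt P\<close> and \<open>avg f Q < 2^d avg f P\<close>'' is well founded on them, and we
  select its kernel: a set of cubes none of which dominates another, dominating every cube
  outside it. Absorption gives the covering property; independence gives the trichotomy,
  because dyadic cubes that meet are nested.\<close>

lemma side_pos [simp]: "0 < side Q"
  by (simp add: side_def)

lemma side_prt: "side (prt Q) = 2 * side Q"
  by (simp add: side_def prt_def powr_add)

lemma fst_prt [simp]: "fst (prt Q) = fst Q + 1"
  by (simp add: prt_def)

lemma mem_dcube_iff_floor: "x \<in> dcube Q \<longleftrightarrow> (\<forall>i. \<lfloor>x$i / side Q\<rfloor> = snd Q i)"
  by (simp add: dcube_def floor_eq_iff pos_le_divide_eq pos_divide_less_eq flip: side_def)

lemma dcube_subset_prt: "dcube Q \<subseteq> dcube (prt Q)"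
proof
  fix x
  assume "x \<in> dcube Q"
  then have "\<lfloor>x$i / side (prt Q)\<rfloor> = snd (prt Q) i" for i
    using floor_divide_real_eq_div[of 2 "x$i / side Q"]
    by (simp add: mem_dcube_iff_floor side_prt field_simps) (simp add: prt_def)
  then show "x \<in> dcube (prt Q)"
    by (simp add: mem_dcube_iff_floor)
qed

lemma dyad_eq_if_same_generation:
  assumes "x \<in> dcube A" "x \<in> dcube B" "fst A = fst B"
  shows "A = B"
proof -
  have "side A = side B"
    using assms(3) by (simp add: side_def)
  then have "snd A = snd B"
    using assms(1,2) by (auto simp: mem_dcube_iff_floor)
  then show ?thesis
    using assms(3) by (simp add: prod_eq_iff)
qed

lemma fst_funpow_prt: "fst ((prt ^^ k) Q) = fst Q + int k"
  by (induction k) (auto simp: prt_def)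

lemma dcube_subset_funpow_prt: "dcube Q \<subseteq> dcube ((prt ^^ k) Q)"
proof (induction k)
  case (Suc k)
  then show ?case
    using dcube_subset_prt[of "(prt ^^ k) Q"] by simp
qed simp

lemma dcube_subset_of_common_point:
  assumes "x \<in> dcube A" "x \<in> dcube B" "fst A \<le> fst B"
  shows "dcube A \<subseteq> dcube B"
proof -
  define k where "k = nat (fst B - fst A)"
  have "x \<in> dcube ((prt ^^ k) A)" "fst ((prt ^^ k) A) = fst B"
    using assms(1,3) dcube_subset_funpow_prt[of A k] by (auto simp: fst_funpow_prt k_def)
  then have "(prt ^^ k) A = B"
    using assms(2) dyad_eq_if_same_generation by blast
  then show ?thesis
    using dcube_subset_funpow_prt by metis
qed

lemma dcube_between_boxes:
  fixes Q :: "('d::finite) dyad"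
  defines "a \<equiv> (\<chi> i. real_of_int (snd Q i) * side Q) :: real^'d"
  defines "b \<equiv> (\<chi> i. (real_of_int (snd Q i) + 1) * side Q) :: real^'d"
  shows "box a b \<subseteq> dcube Q" "dcube Q \<subseteq> cbox a b"
    and "measure lborel (box a b) = side Q ^ CARD('d)"
    and "measure lborel (cbox a b) = side Q ^ CARD('d)"
proof -
  show "box a b \<subseteq> dcube Q" "dcube Q \<subseteq> cbox a b"
    by (auto simp: a_def b_def mem_box_cart dcube_def side_def less_imp_le)
  have edge: "(b - a) \<bullet> u = side Q" if "u \<in> Basis" for u
    using that by (auto simp: a_def b_def Basis_vec_def inner_axis algebra_simps)
  then have le: "\<forall>u\<in>Basis. a \<bullet> u \<le> b \<bullet> u"
    by (metis diff_ge_0_iff_ge inner_diff_left less_imp_le side_pos)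
  have "(\<Prod>u\<in>Basis. (b - a) \<bullet> u) = (\<Prod>u\<in>(Basis :: (real^'d) set). side Q)"
    using edge by (rule prod.cong[OF refl])
  also have "\<dots> = side Q ^ CARD('d)"
    by simp
  finally have "(\<Prod>u\<in>Basis. (b - a) \<bullet> u) = side Q ^ CARD('d)" .
  then show "measure lborel (box a b) = side Q ^ CARD('d)"
    and "measure lborel (cbox a b) = side Q ^ CARD('d)"
    by (simp_all only: measure_lborel_box_eq measure_lborel_cbox_eq if_P[OF le])
qed

lemma dcube_lmeasurable: "dcube Q \<in> lmeasurable"
proof -
  have "dcube Q \<in> sets borel"
    unfolding dcube_def by measurable
  then have "dcube Q \<in> sets lebesgue"
    by (simp add: sets_completionI_sets)
  then show ?thesis
    using dcube_between_boxes(2) fmeasurableI2[OF lmeasurable_cbox] by blast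
qed

lemma measure_dcube: "measure lebesgue (dcube (Q::('d::finite) dyad)) = side Q ^ CARD('d)"
proof (rule antisym)
  show "measure lebesgue (dcube Q) \<le> side Q ^ CARD('d)"
    using measure_mono_fmeasurable[OF dcube_between_boxes(2)[of Q] _ lmeasurable_cbox]
      dcube_between_boxes(4)[of Q] dcube_lmeasurable[of Q]
    by (simp add: fmeasurable_def)
  show "side Q ^ CARD('d) \<le> measure lebesgue (dcube Q)"
    using measure_mono_fmeasurable[OF dcube_between_boxes(1)[of Q] _ dcube_lmeasurable]
      dcube_between_boxes(3)[of Q]
    by simp
qed

lemma le_add_powr_divide:
  fixes y t p :: real
  assumes "0 \<le> y" "0 < t" "1 \<le> p"
  shows "y \<le> t + y powr p / t powr (p - 1)"
proof (cases "y \<le> t")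
  case True
  then show ?thesis by (simp add: add_increasing2)
next
  case False
  then have "y * t powr (p - 1) \<le> y * y powr (p - 1)"
    using assms by (intro mult_left_mono powr_mono2) auto
  also have "\<dots> = y powr p"
    using False assms by (simp add: powr_mult_base)
  finally show ?thesis
    using assms by (simp add: pos_le_divide_eq add_increasing)
qed

lemma set_integral_abs_le_powr:
  fixes f :: "'a \<Rightarrow> real"
  assumes f: "f \<in> borel_measurable M" and int: "integrable M (\<lambda>x. \<bar>f x\<bar> powr p)"
    and A: "A \<in> sets M" "emeasure M A < \<infinity>" and t: "0 < t" and p: "1 \<le> p"
  shows "(LINT x:A|M. \<bar>f x\<bar>) \<le> t * measure M A + (\<integral>x. \<bar>f x\<bar> powr p \<partial>M) / t powr (p - 1)"
proof -
  txt \<open>The pointwise bound \<open>y \<le> t + y^p / t^(p-1)\<close> replaces Hoelder's inequality and also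
    yields the integrability of \<open>|f|\<close> on \<open>A\<close>.\<close>
  define g where "g x = indicator A x * t + indicator A x * \<bar>f x\<bar> powr p / t powr (p - 1)" for x
  have int_A: "integrable M (\<lambda>x. indicator A x * \<bar>f x\<bar> powr p)"
    using integrable_mult_indicator[OF A(1) int] by simp
  have "integrable M (\<lambda>x. indicator A x * t)"
    using A by (intro integrable_mult_left integrable_real_indicator)
  then have int_g: "integrable M g"
    unfolding g_def using int_A by (intro Bochner_Integration.integrable_add integrable_divide)
  have bound: "indicator A x * \<bar>f x\<bar> \<le> g x" for x
    using le_add_powr_divide[of "\<bar>f x\<bar>" t p] t p by (simp add: g_def split: split_indicator)
  have "AE x in M. norm (indicator A x * \<bar>f x\<bar>) \<le> norm (g x)"
    using bound by (intro AE_I2) (auto intro: order_trans[OF _ abs_ge_self] simp: abs_mult)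
  then have "integrable M (\<lambda>x. indicator A x * \<bar>f x\<bar>)"
    using A(1) f by (intro Bochner_Integration.integrable_bound[OF int_g]) auto
  then have "(LINT x:A|M. \<bar>f x\<bar>) \<le> integral\<^sup>L M g"
    unfolding set_lebesgue_integral_def using bound by (intro integral_mono[OF _ int_g]) auto
  also have "\<dots> = t * measure M A + (\<integral>x. indicator A x * \<bar>f x\<bar> powr p \<partial>M) / t powr (p - 1)"
    unfolding g_def using A int_A by (simp add: mult.commute)
  also have "(\<integral>x. indicator A x * \<bar>f x\<bar> powr p \<partial>M) \<le> (\<integral>x. \<bar>f x\<bar> powr p \<partial>M)"
    using int_A int by (intro integral_mono) (auto split: split_indicator)
  finally show ?thesis
    using t by (simp add: divide_right_mono)
qed

lemma avg_le_side_powr: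
  fixes f :: "real^'d::finite \<Rightarrow> real" and Q :: "'d dyad"
  assumes f: "f \<in> borel_measurable lebesgue" and int: "integrable lebesgue (\<lambda>x. \<bar>f x\<bar> powr p)"
    and p: "1 \<le> p"
  shows "avg f Q \<le> (1 + (\<integral>x. \<bar>f x\<bar> powr p \<partial>lebesgue)) * side Q powr (- real CARD('d) / p)"
proof -
  define s where "s = side Q"
  define d where "d = real CARD('d)"
  define I where "I = (\<integral>x. \<bar>f x\<bar> powr p \<partial>lebesgue)"
  define t where "t = s powr (- d / p)"
  have s: "0 < s"
    by (simp add: s_def)
  then have t: "0 < t"
    by (simp add: t_def)
  have measure: "measure lebesgue (dcube Q) = s powr d"
    using s by (simp add: measure_dcube s_def d_def powr_realpow)
  have "t powr (p - 1) * s powr d = s powr (d / p)"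
    using s p by (simp add: t_def powr_powr flip: powr_add) (simp add: field_simps)
  also have "\<dots> = 1 / t"
    using s by (simp add: t_def powr_minus_divide)
  finally have scale: "t powr (p - 1) * s powr d = 1 / t" .
  have "avg f Q \<le> (t * s powr d + I / t powr (p - 1)) / s powr d"
    unfolding avg_def measure[symmetric] I_def
    using set_integral_abs_le_powr[OF f int _ _ t p, of "dcube Q"] dcube_lmeasurable[of Q]
    by (intro divide_right_mono) (auto simp: fmeasurable_def)
  also have "\<dots> = t + I / (t powr (p - 1) * s powr d)"
    using s by (simp add: field_simps)
  also have "\<dots> = (1 + I) * t"
    unfolding scale using t by (simp add: algebra_simps)
  finally show ?thesis
    by (simp add: I_def t_def s_def d_def)
qed

lemma bdd_above_generation_large_avg:
  fixes f :: "real^'d::finite \<Rightarrow> real"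
  assumes f: "f \<in> borel_measurable lebesgue" and int: "integrable lebesgue (\<lambda>x. \<bar>f x\<bar> powr p)"
    and p: "1 \<le> p" and \<alpha>: "0 < \<alpha>" "p < CARD('d) / \<alpha>" and \<epsilon>: "0 < \<epsilon>"
  shows "bdd_above (fst ` {Q::'d dyad. \<epsilon> < side Q powr \<alpha> * avg f Q})"
proof -
  define C where "C = 1 + (\<integral>x. \<bar>f x\<bar> powr p \<partial>lebesgue)"
  define \<beta> where "\<beta> = CARD('d) / p - \<alpha>"
  have C: "0 < C"
    unfolding C_def by (simp add: add_pos_nonneg integral_nonneg_AE)
  have \<beta>: "0 < \<beta>"
    using \<alpha> p by (simp add: \<beta>_def field_simps)
  have "fst Q \<le> \<lceil>log 2 (C / \<epsilon>) / \<beta>\<rceil>"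
    if large: "\<epsilon> < side Q powr \<alpha> * avg f Q" for Q :: "'d dyad"
  proof -
    have "side Q powr \<alpha> * avg f Q \<le> side Q powr \<alpha> * (C * side Q powr (- real CARD('d) / p))"
      using avg_le_side_powr[OF f int p, of Q] by (intro mult_left_mono) (simp_all add: C_def)
    also have "\<dots> = C * 2 powr (- (\<beta> * fst Q))"
      by (simp add: side_def powr_powr flip: powr_add) (simp add: \<beta>_def field_simps)
    finally have "\<epsilon> < C / 2 powr (\<beta> * fst Q)"
      using large by (simp add: powr_minus_divide)
    then have "2 powr (\<beta> * fst Q) < C / \<epsilon>"
      using \<epsilon> by (simp add: field_simps)
    then have "\<beta> * fst Q < log 2 (C / \<epsilon>)"
      using C \<epsilon> by (simp add: less_log_iff)
    then have "fst Q < log 2 (C / \<epsilon>) / \<beta>"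
      using \<beta> by (simp add: pos_less_divide_eq mult.commute)
    then show ?thesis
      by (simp add: le_ceiling_iff)
  qed
  then show ?thesis
    by (intro bdd_aboveI[of _ "\<lceil>log 2 (C / \<epsilon>) / \<beta>\<rceil>"]) blast
qed

lemma wf_kernel_exists:
  assumes "wf R"
  obtains T where "T \<subseteq> S" and "\<And>P Q. P \<in> T \<Longrightarrow> Q \<in> T \<Longrightarrow> (P, Q) \<notin> R"
    and "\<And>Q. Q \<in> S \<Longrightarrow> Q \<notin> T \<Longrightarrow> \<exists>P\<in>T. (P, Q) \<in> R"
proof -
  define g where "g = wfrec R (\<lambda>g Q. Q \<in> S \<and> \<not> (\<exists>P. (P, Q) \<in> R \<and> g P))"
  have g: "g Q \<longleftrightarrow> Q \<in> S \<and> \<not> (\<exists>P. (P, Q) \<in> R \<and> g P)" for Q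
  proof -
    have "g Q \<longleftrightarrow> Q \<in> S \<and> \<not> (\<exists>P. (P, Q) \<in> R \<and> cut g R Q P)"
      unfolding g_def by (subst wfrec[OF assms]) (rule refl)
    then show ?thesis
      by (auto simp: cut_apply)
  qed
  show ?thesis
  proof (rule that[of "Collect g"])
    show "Collect g \<subseteq> S"
      using g by blast
    show "(P, Q) \<notin> R" if "P \<in> Collect g" "Q \<in> Collect g" for P Q
      using that g[of Q] by blast
    show "\<exists>P\<in>Collect g. (P, Q) \<in> R" if "Q \<in> S" "Q \<notin> Collect g" for Q
      using that g[of Q] by blast
  qed
qed

lemma dyadic_stopping_cubes:
  fixes S :: "('d::finite) dyad set" and w :: "'d dyad \<Rightarrow> real"
  assumes "bdd_above (fst ` S)" and w_pos: "\<And>Q. Q \<in> S \<Longrightarrow> 0 < w Q" and D: "1 \<le> D"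
  obtains T where "T \<subseteq> S"
    and "\<And>Q. Q \<in> S \<Longrightarrow> \<exists>P\<in>T. dcube Q \<subseteq> dcube (prt P) \<and> w Q \<le> D * w P"
    and "\<And>Q P. Q \<in> T \<Longrightarrow> P \<in> T \<Longrightarrow> dcube (prt Q) = dcube (prt P)
      \<or> dcube (prt Q) \<inter> dcube (prt P) = {} \<or> w Q / w P \<notin> {1 / D <..< D}"
proof -
  obtain G where G: "\<And>Q. Q \<in> S \<Longrightarrow> fst Q \<le> G"
    using assms(1) by (auto simp: bdd_above_def)
  define R where "R = {(P, Q). P \<in> S \<and> fst Q < fst P \<and> dcube (prt Q) \<subseteq> dcube (prt P) \<and> w Q < D * w P}"
  have "R \<subseteq> Wellfounded.measure (\<lambda>Q. nat (G - fst Q))"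
    using G by (fastforce simp: R_def)
  then have "wf R"
    using wf_measure wf_subset by blast
  then obtain T where "T \<subseteq> S" and independent: "\<And>P Q. P \<in> T \<Longrightarrow> Q \<in> T \<Longrightarrow> (P, Q) \<notin> R"
    and absorbing: "\<And>Q. Q \<in> S \<Longrightarrow> Q \<notin> T \<Longrightarrow> \<exists>P\<in>T. (P, Q) \<in> R"
    using wf_kernel_exists[of R S] by blast
  have dominated: "D * w P \<le> w Q"
    if "Q \<in> T" "P \<in> T" "fst Q < fst P" "x \<in> dcube (prt Q)" "x \<in> dcube (prt P)" for Q P x
  proof -
    have "dcube (prt Q) \<subseteq> dcube (prt P)"
      using that dcube_subset_of_common_point[of x "prt Q" "prt P"] by simp
    moreover have "(P, Q) \<notin> R" "P \<in> S"
      using independent that(1,2) \<open>T \<subseteq> S\<close> by blast+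
    ultimately show ?thesis
      using that(3) by (auto simp: R_def)
  qed
  have cover: "\<exists>P\<in>T. dcube Q \<subseteq> dcube (prt P) \<and> w Q \<le> D * w P" if Q: "Q \<in> S" for Q
  proof (cases "Q \<in> T")
    case True
    moreover have "w Q \<le> D * w Q"
      using mult_right_mono[OF D, of "w Q"] w_pos[OF Q] by simp
    ultimately show ?thesis
      using dcube_subset_prt by blast
  next
    case False
    then obtain P where "(P, Q) \<in> R" "P \<in> T"
      using absorbing Q by blast
    then show ?thesis
      using dcube_subset_prt[of Q] by (force simp: R_def)
  qed
  have sparse: "dcube (prt Q) = dcube (prt P) \<or> dcube (prt Q) \<inter> dcube (prt P) = {}
      \<or> w Q / w P \<notin> {1 / D <..< D}" if "Q \<in> T" "P \<in> T" for Q P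
  proof (cases "dcube (prt Q) \<inter> dcube (prt P) = {}")
    case False
    then obtain x where x: "x \<in> dcube (prt Q)" "x \<in> dcube (prt P)"
      by blast
    have "0 < w Q" "0 < w P"
      using that \<open>T \<subseteq> S\<close> w_pos by blast+
    consider "fst Q = fst P" | "fst Q < fst P" | "fst P < fst Q"
      by linarith
    then show ?thesis
    proof cases
      case 1
      then show ?thesis
        using dyad_eq_if_same_generation[OF x] by simp
    next
      case 2
      have "D \<le> w Q / w P"
        using dominated[OF that 2 x] \<open>0 < w P\<close> by (simp add: pos_le_divide_eq)
      then show ?thesis
        by simp
    next
      case 3
      have "w Q / w P \<le> 1 / D"
        using dominated[OF that(2,1) 3 x(2,1)] \<open>0 < w P\<close> D by (simp add: field_simps)
      then show ?thesis
        by simp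
    qed
  qed simp
  show thesis
    using \<open>T \<subseteq> S\<close> cover sparse by (rule that)
qed

theorem lemma3p6:
  fixes f :: "real^'d \<Rightarrow> real" and \<alpha> p \<epsilon> :: real
  assumes "0 < \<alpha>" "\<alpha> < real CARD('d)"
    and "1 \<le> p" "p < real CARD('d) / \<alpha>"
    and "f \<in> borel_measurable lebesgue" "integrable lebesgue (\<lambda>x. \<bar>f x\<bar> powr p)"
    and "\<epsilon> > 0"
  shows "\<exists>Qt \<subseteq> Qalpha \<alpha> f.
    (\<forall>Q\<in>Qalpha \<alpha> f. side Q powr \<alpha> * avg f Q > \<epsilon> \<longrightarrow>
        (\<exists>P\<in>Qt. dcube Q \<subseteq> dcube (prt P) \<and> avg f Q \<le> 2 ^ CARD('d) * avg f P)) \<and>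
    (\<forall>Q\<in>Qt. \<forall>P\<in>Qt. dcube (prt Q) = dcube (prt P) \<or> dcube (prt Q) \<inter> dcube (prt P) = {}
        \<or> avg f Q / avg f P \<notin> {2 powr (- real CARD('d)) <..< 2 ^ CARD('d)})"
proof -
  define S where "S = {Q \<in> Qalpha \<alpha> f. \<epsilon> < side Q powr \<alpha> * avg f Q}"
  have bdd: "bdd_above (fst ` S)"
    using bdd_above_generation_large_avg[OF assms(5,6,3,1,4,7)]
    by (rule bdd_above_mono) (auto simp: S_def)
  have pos: "0 < avg f Q" if "Q \<in> S" for Q
  proof -
    have "0 < side Q powr \<alpha> * avg f Q"
      using that \<open>\<epsilon> > 0\<close> by (simp add: S_def)
    moreover have "0 < side Q powr \<alpha>"
      by (simp add: side_def)
    ultimately show ?thesis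
      by (simp add: zero_less_mult_iff)
  qed
  have "(1::real) \<le> 2 ^ CARD('d)"
    by simp
  with bdd pos show ?thesis
  proof (rule dyadic_stopping_cubes)
    fix T
    assume "T \<subseteq> S"
      and cover: "\<And>Q. Q \<in> S \<Longrightarrow> \<exists>P\<in>T. dcube Q \<subseteq> dcube (prt P) \<and> avg f Q \<le> 2 ^ CARD('d) * avg f P"
      and sparse: "\<And>Q P. Q \<in> T \<Longrightarrow> P \<in> T \<Longrightarrow> dcube (prt Q) = dcube (prt P)
        \<or> dcube (prt Q) \<inter> dcube (prt P) = {} \<or> avg f Q / avg f P \<notin> {1 / 2 ^ CARD('d) <..< 2 ^ CARD('d)}"
    have "2 powr (- real CARD('d)) = 1 / 2 ^ CARD('d)"
      by (simp add: powr_minus_divide powr_realpow)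
    then show ?thesis
      using \<open>T \<subseteq> S\<close> cover sparse unfolding S_def by (intro exI[of _ T] conjI) auto
  qed
qed

end
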